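(* There is a constant $C$ such that for every function $\psi$ that is continuously differentiable on the closed half-plane $[0,\infty)\times\mathbb{R}$ with $\psi,\partial_r\psi\in L^2(\mu)$, $$\|\psi\|_{L^2(\rho_* )}\le C\big(\|\psi\|_{L^2(\mu)}+\|\partial_r\psi\|_{L^2(\mu)}\big).$$
   Context: $\mathbb{H}=\{(r,z):r>0,z\in\mathbb{R}\}$. $\rho_*(r,z)=\frac1{16\sqrt\pi}re^{-\frac{r^2+z^2}4}$; $L^2(\rho_* )$ is $L^2$ on $\mathbb{H}$ with respect to the measure $\rho_*\,dr\,dz$, and $L^2(\mu)$ is $L^2$ on $\mathbb{H}$ with respect to $d\mu=r^2\rho_*\,dr\,dz=\frac1{16\sqrt\pi}r^3e^{-\frac{r^2+z^2}4}dr\,dz$. (Equivalently, the left side is $\|r^{-1}\psi\|_{L^2(\mu)}$.) *)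

theory Defs
  imports "HOL-Analysis.Analysis"
begin

definition Hplane :: "(real \<times> real) set" where
  "Hplane = {p. fst p > 0}"

definition Hclosed :: "(real \<times> real) set" where
  "Hclosed = {p. fst p \<ge> 0}"

definition rho_star :: "real \<times> real \<Rightarrow> real" where
  "rho_star p = 1 / (16 * sqrt pi) * fst p * exp (- ((fst p)\<^sup>2 + (snd p)\<^sup>2) / 4)"

definition mu_weight :: "real \<times> real \<Rightarrow> real" where
  "mu_weight p = (fst p)\<^sup>2 * rho_star p"

definition memL2 :: "(real \<times> real \<Rightarrow> real) \<Rightarrow> (real \<times> real \<Rightarrow> real) \<Rightarrow> bool" where
  "memL2 w f \<longleftrightarrow> set_integrable lborel Hplane (\<lambda>x. (f x)\<^sup>2 * w x)"

definition L2norm :: "(real \<times> real \<Rightarrow> real) \<Rightarrow> (real \<times> real \<Rightarrow> real) \<Rightarrow> real" where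
  "L2norm w f = sqrt (\<integral>x\<in>Hplane. (f x)\<^sup>2 * w x \<partial>lborel)"

end

theory Submission
  imports Defs
begin

(* Fix z. Both weights carry the same Gaussian factor c(z) = exp(-z^2/4) / (16 sqrt pi), so
   it suffices to bound int_0^oo f^2 r e^(-r^2/4) dr, where f = psi(., z). For r >= 2 the
   factor r^2 >= 1 lets the mu-weight dominate. On [0,2] the Gaussian factor lies between
   exp(-1) and 1, and integrating the derivative of f^2 r^2 (2 - r), which vanishes at r = 0
   and r = 2, yields the Hardy-type bound int_0^2 f^2 r <= int_0^2 (8 f_r^2 + 3 f^2) r^3.
   Tonelli integrates the fibrewise bound over z; the constants 3e + 1 and 8e are below 25,
   which gives C = 5. *)

lemma borel_measurable_continuous_on_ennreal_indicator:
  fixes h :: "'a::topological_space \<Rightarrow> real"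
  assumes "S \<in> sets borel" "continuous_on S h"
  shows "(\<lambda>x. ennreal (h x) * indicator S x) \<in> borel_measurable borel"
proof -
  have "(\<lambda>x. ennreal (indicator S x *\<^sub>R h x)) \<in> borel_measurable borel"
    using borel_measurable_continuous_on_indicator[OF assms] by measurable
  also have "(\<lambda>x. ennreal (indicator S x *\<^sub>R h x)) = (\<lambda>x. ennreal (h x) * indicator S x)"
    by (auto simp: fun_eq_iff indicator_def)
  finally show ?thesis .
qed

lemma nn_integral_eq_set_integral:
  fixes f :: "'a \<Rightarrow> real"
  assumes "set_integrable M A f" "\<And>x. x \<in> A \<Longrightarrow> 0 \<le> f x"
  shows "(\<integral>\<^sup>+x\<in>A. ennreal (f x) \<partial>M) = ennreal (\<integral>x\<in>A. f x \<partial>M)"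
proof -
  have "(\<integral>\<^sup>+x\<in>A. ennreal (f x) \<partial>M) = (\<integral>\<^sup>+x. ennreal (indicator A x *\<^sub>R f x) \<partial>M)"
    by (intro nn_integral_cong) (simp add: indicator_def)
  also have "\<dots> = ennreal (\<integral>x\<in>A. f x \<partial>M)"
    using assms unfolding set_integrable_def set_lebesgue_integral_def
    by (intro nn_integral_eq_integral) (auto simp: indicator_def)
  finally show ?thesis .
qed

lemma set_integrableI_nn_integral_finite:
  fixes f :: "'a \<Rightarrow> real"
  assumes "set_borel_measurable M A f" "\<And>x. x \<in> A \<Longrightarrow> 0 \<le> f x"
    and "(\<integral>\<^sup>+x\<in>A. ennreal (f x) \<partial>M) < \<infinity>"
  shows "set_integrable M A f"
  unfolding set_integrable_def
proof (rule integrableI_nonneg)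
  show "(\<lambda>x. indicator A x *\<^sub>R f x) \<in> borel_measurable M"
    using assms(1) by (simp add: set_borel_measurable_def)
  show "AE x in M. 0 \<le> indicator A x *\<^sub>R f x"
    using assms(2) by (simp add: indicator_def)
  have "(\<integral>\<^sup>+x. ennreal (indicator A x *\<^sub>R f x) \<partial>M) = (\<integral>\<^sup>+x\<in>A. ennreal (f x) \<partial>M)"
    by (intro nn_integral_cong) (simp add: indicator_def)
  with assms(3) show "(\<integral>\<^sup>+x. ennreal (indicator A x *\<^sub>R f x) \<partial>M) < \<infinity>"
    by simp
qed

lemma nn_integral_lborel_pair:
  fixes F :: "real \<times> real \<Rightarrow> ennreal"
  assumes "F \<in> borel_measurable borel"
  shows "(\<integral>\<^sup>+p. F p \<partial>lborel) = (\<integral>\<^sup>+z. (\<integral>\<^sup>+r. F (r, z) \<partial>lborel) \<partial>lborel)"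
  using lborel_pair.nn_integral_snd[of F] assms by (simp add: lborel_prod)

section \<open>A Hardy inequality with Gaussian weight on the half-line\<close>

lemma hardy_pointwise_bound:
  fixes x y r :: real
  assumes "0 \<le> r"
  shows "x\<^sup>2 * r \<le> (2 * x * y * (r\<^sup>2 * (2 - r)) + x\<^sup>2 * (4 * r - 3 * r\<^sup>2)) + (8 * y\<^sup>2 + 3 * x\<^sup>2) * r ^ 3"
proof -
  have "0 \<le> 20 - 20 * r + 23 * r\<^sup>2"
    using zero_le_power2[of "23 * r - 10"] by (simp add: power2_eq_square algebra_simps)
  then have "0 \<le> r * ((8 * y * r + (2 - r) * x)\<^sup>2 + (20 - 20 * r + 23 * r\<^sup>2) * x\<^sup>2)"
    using assms by simp
  also have "\<dots> = 8 * ((2 * x * y * (r\<^sup>2 * (2 - r)) + x\<^sup>2 * (4 * r - 3 * r\<^sup>2))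
      + (8 * y\<^sup>2 + 3 * x\<^sup>2) * r ^ 3 - x\<^sup>2 * r)"
    by (simp add: algebra_simps power2_eq_square power3_eq_cube)
  finally show ?thesis by simp
qed

text \<open>The first summand of the pointwise bound is the derivative of \<open>f\<^sup>2 r\<^sup>2 (2 - r)\<close>,
  which vanishes at both ends of \<open>[0,2]\<close>.\<close>
lemma hardy_inequality_0_2:
  fixes f g :: "real \<Rightarrow> real"
  assumes der: "\<And>r. r \<in> {0..2} \<Longrightarrow> (f has_real_derivative g r) (at r within {0..2})"
    and cont: "continuous_on {0..2} g"
  shows "integral {0..2} (\<lambda>r. (f r)\<^sup>2 * r) \<le> integral {0..2} (\<lambda>r. (8 * (g r)\<^sup>2 + 3 * (f r)\<^sup>2) * r ^ 3)"
proof -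
  have cf: "continuous_on {0..2} f"
    using der by (metis DERIV_continuous continuous_on_eq_continuous_within)
  define F where "F r = (f r)\<^sup>2 * (r\<^sup>2 * (2 - r))" for r
  define F' where "F' r = 2 * f r * g r * (r\<^sup>2 * (2 - r)) + (f r)\<^sup>2 * (4 * r - 3 * r\<^sup>2)" for r
  have "(F has_vector_derivative F' r) (at r within {0..2})" if "r \<in> {0..2}" for r
    unfolding has_real_derivative_iff_has_vector_derivative[symmetric] F_def F'_def
    by (rule derivative_eq_intros der[OF that] refl | simp)+ (simp add: algebra_simps power2_eq_square)
  then have "(F' has_integral F 2 - F 0) {0..2}"
    by (intro fundamental_theorem_of_calculus) auto
  then have "(F' has_integral 0) {0..2}"
    by (simp add: F_def)
  moreover have "((\<lambda>r. (8 * (g r)\<^sup>2 + 3 * (f r)\<^sup>2) * r ^ 3) integrable_on {0..2})"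
    by (intro integrable_continuous_interval continuous_intros cf cont)
  ultimately have "((\<lambda>r. F' r + (8 * (g r)\<^sup>2 + 3 * (f r)\<^sup>2) * r ^ 3) has_integral
      0 + integral {0..2} (\<lambda>r. (8 * (g r)\<^sup>2 + 3 * (f r)\<^sup>2) * r ^ 3)) {0..2}"
    by (intro has_integral_add) auto
  moreover have "((\<lambda>r. (f r)\<^sup>2 * r) integrable_on {0..2})"
    by (intro integrable_continuous_interval continuous_intros cf)
  ultimately show ?thesis
    using hardy_pointwise_bound[of _ "f _" "g _"]
    by (fastforce simp: F'_def intro: has_integral_le[OF integrable_integral])
qed

lemma nn_integral_gaussian_weight_split:
  fixes f :: "real \<Rightarrow> real"
  assumes cont: "continuous_on {0..} f"
  shows "(\<integral>\<^sup>+r\<in>{0<..}. ennreal ((f r)\<^sup>2 * (r * exp (- r\<^sup>2 / 4))) \<partial>lborel)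
    \<le> (\<integral>\<^sup>+r\<in>{0..2}. ennreal ((f r)\<^sup>2 * r) \<partial>lborel)
      + (\<integral>\<^sup>+r\<in>{0<..}. ennreal ((f r)\<^sup>2 * (r ^ 3 * exp (- r\<^sup>2 / 4))) \<partial>lborel)"
proof -
  have "(\<integral>\<^sup>+r\<in>{0<..}. ennreal ((f r)\<^sup>2 * (r * exp (- r\<^sup>2 / 4))) \<partial>lborel)
    \<le> (\<integral>\<^sup>+r. ennreal ((f r)\<^sup>2 * r) * indicator {0..2} r
      + ennreal ((f r)\<^sup>2 * (r ^ 3 * exp (- r\<^sup>2 / 4))) * indicator {0<..} r \<partial>lborel)"
  proof (intro nn_integral_mono)
    fix r :: real
    have "(f r)\<^sup>2 * (r * exp (- r\<^sup>2 / 4)) \<le> (f r)\<^sup>2 * r" if "0 < r"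
      using that by (intro mult_left_mono) auto
    moreover have "(f r)\<^sup>2 * (r * exp (- r\<^sup>2 / 4)) \<le> (f r)\<^sup>2 * (r ^ 3 * exp (- r\<^sup>2 / 4))" if "2 < r"
      using that mult_mono[of 1 r 1 r] by (intro mult_left_mono) (auto simp: power3_eq_cube)
    ultimately show "ennreal ((f r)\<^sup>2 * (r * exp (- r\<^sup>2 / 4))) * indicator {0<..} r
      \<le> ennreal ((f r)\<^sup>2 * r) * indicator {0..2} r
        + ennreal ((f r)\<^sup>2 * (r ^ 3 * exp (- r\<^sup>2 / 4))) * indicator {0<..} r"
      by (cases "0 < r"; cases "r \<le> 2") (auto intro!: add_increasing add_increasing2 ennreal_leI)
  qed
  also have "\<dots> = (\<integral>\<^sup>+r\<in>{0..2}. ennreal ((f r)\<^sup>2 * r) \<partial>lborel)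
      + (\<integral>\<^sup>+r\<in>{0<..}. ennreal ((f r)\<^sup>2 * (r ^ 3 * exp (- r\<^sup>2 / 4))) \<partial>lborel)"
  proof (intro nn_integral_add)
    have "continuous_on {0..2} f" "continuous_on {0<..} f"
      using cont by (auto intro: continuous_on_subset)
    then show "(\<lambda>r. ennreal ((f r)\<^sup>2 * r) * indicator {0..2} r) \<in> borel_measurable lborel"
      and "(\<lambda>r. ennreal ((f r)\<^sup>2 * (r ^ 3 * exp (- r\<^sup>2 / 4))) * indicator {0<..} r) \<in> borel_measurable lborel"
      by (auto intro!: borel_measurable_continuous_on_ennreal_indicator continuous_intros)
  qed
  finally show ?thesis .
qed

text \<open>On \<open>[0,2]\<close> the Gaussian factor is at least \<open>exp (- 1)\<close>.\<close>
lemma nn_integral_hardy_0_2_le: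
  fixes f g :: "real \<Rightarrow> real"
  assumes der: "\<And>r. r \<in> {0..2} \<Longrightarrow> (f has_real_derivative g r) (at r within {0..2})"
    and cont: "continuous_on {0..2} g"
  shows "(\<integral>\<^sup>+r\<in>{0..2}. ennreal ((f r)\<^sup>2 * r) \<partial>lborel)
    \<le> (\<integral>\<^sup>+r\<in>{0<..}. ennreal (exp 1 * (8 * (g r)\<^sup>2 + 3 * (f r)\<^sup>2) * (r ^ 3 * exp (- r\<^sup>2 / 4))) \<partial>lborel)"
proof -
  have cf: "continuous_on {0..2} f"
    using der by (metis DERIV_continuous continuous_on_eq_continuous_within)
  have "(\<integral>\<^sup>+r\<in>{0..2}. ennreal ((f r)\<^sup>2 * r) \<partial>lborel) = ennreal (integral {0..2} (\<lambda>r. (f r)\<^sup>2 * r))"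
    by (intro nn_integral_has_integral_lebesgue' integrable_integral integrable_continuous_interval
        continuous_intros cf) auto
  also have "\<dots> \<le> ennreal (integral {0..2} (\<lambda>r. (8 * (g r)\<^sup>2 + 3 * (f r)\<^sup>2) * r ^ 3))"
    using hardy_inequality_0_2[OF der cont] by (rule ennreal_leI)
  also have "\<dots> = (\<integral>\<^sup>+r\<in>{0..2}. ennreal ((8 * (g r)\<^sup>2 + 3 * (f r)\<^sup>2) * r ^ 3) \<partial>lborel)"
    by (intro nn_integral_has_integral_lebesgue'[symmetric] integrable_integral integrable_continuous_interval
        continuous_intros cf cont) auto
  also have "\<dots> \<le> (\<integral>\<^sup>+r\<in>{0<..}. ennreal (exp 1 * (8 * (g r)\<^sup>2 + 3 * (f r)\<^sup>2) * (r ^ 3 * exp (- r\<^sup>2 / 4))) \<partial>lborel)"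
  proof (intro nn_integral_mono)
    fix r :: real
    have "1 \<le> exp 1 * exp (- r\<^sup>2 / 4)" if "r \<le> 2" "0 < r"
      using that power_mono[of r 2 2] by (simp flip: exp_add)
    from mult_left_mono[OF this, of "(8 * (g r)\<^sup>2 + 3 * (f r)\<^sup>2) * r ^ 3"]
    show "ennreal ((8 * (g r)\<^sup>2 + 3 * (f r)\<^sup>2) * r ^ 3) * indicator {0..2} r
      \<le> ennreal (exp 1 * (8 * (g r)\<^sup>2 + 3 * (f r)\<^sup>2) * (r ^ 3 * exp (- r\<^sup>2 / 4))) * indicator {0<..} r"
      by (cases "0 < r \<and> r \<le> 2") (auto intro!: ennreal_leI simp: mult_ac indicator_def)
  qed
  finally show ?thesis .
qed

lemma gaussian_hardy_inequality:
  fixes f g :: "real \<Rightarrow> real"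
  assumes der: "\<And>r. 0 \<le> r \<Longrightarrow> (f has_real_derivative g r) (at r within {0..})"
    and cont: "continuous_on {0..} g"
  shows "(\<integral>\<^sup>+r\<in>{0<..}. ennreal ((f r)\<^sup>2 * (r * exp (- r\<^sup>2 / 4))) \<partial>lborel)
    \<le> (\<integral>\<^sup>+r\<in>{0<..}. ennreal (((3 * exp 1 + 1) * (f r)\<^sup>2 + 8 * exp 1 * (g r)\<^sup>2) * (r ^ 3 * exp (- r\<^sup>2 / 4))) \<partial>lborel)"
proof -
  have cf: "continuous_on {0..} f"
    using der by (metis DERIV_continuous atLeast_iff continuous_on_eq_continuous_within)
  have hardy: "(\<integral>\<^sup>+r\<in>{0..2}. ennreal ((f r)\<^sup>2 * r) \<partial>lborel)
    \<le> (\<integral>\<^sup>+r\<in>{0<..}. ennreal (exp 1 * (8 * (g r)\<^sup>2 + 3 * (f r)\<^sup>2) * (r ^ 3 * exp (- r\<^sup>2 / 4))) \<partial>lborel)"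
    using der cont
    by (intro nn_integral_hardy_0_2_le has_field_derivative_subset[OF der]) (auto intro: continuous_on_subset)
  have "continuous_on {0<..} f" "continuous_on {0<..} g"
    using cf cont by (auto intro: continuous_on_subset)
  note split = nn_integral_gaussian_weight_split[OF cf]
  also have "(\<integral>\<^sup>+r\<in>{0..2}. ennreal ((f r)\<^sup>2 * r) \<partial>lborel)
      + (\<integral>\<^sup>+r\<in>{0<..}. ennreal ((f r)\<^sup>2 * (r ^ 3 * exp (- r\<^sup>2 / 4))) \<partial>lborel)
    \<le> (\<integral>\<^sup>+r\<in>{0<..}. ennreal (exp 1 * (8 * (g r)\<^sup>2 + 3 * (f r)\<^sup>2) * (r ^ 3 * exp (- r\<^sup>2 / 4))) \<partial>lborel)
      + (\<integral>\<^sup>+r\<in>{0<..}. ennreal ((f r)\<^sup>2 * (r ^ 3 * exp (- r\<^sup>2 / 4))) \<partial>lborel)"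
    using hardy by (rule add_right_mono)
  also have "\<dots> = (\<integral>\<^sup>+r\<in>{0<..}. ennreal (exp 1 * (8 * (g r)\<^sup>2 + 3 * (f r)\<^sup>2) * (r ^ 3 * exp (- r\<^sup>2 / 4)))
      + ennreal ((f r)\<^sup>2 * (r ^ 3 * exp (- r\<^sup>2 / 4))) \<partial>lborel)"
    using \<open>continuous_on {0<..} f\<close> \<open>continuous_on {0<..} g\<close>
    by (subst nn_integral_add[symmetric])
       (auto intro!: borel_measurable_continuous_on_ennreal_indicator continuous_intros simp: distrib_right)
  also have "\<dots> = (\<integral>\<^sup>+r\<in>{0<..}. ennreal (((3 * exp 1 + 1) * (f r)\<^sup>2 + 8 * exp 1 * (g r)\<^sup>2)
      * (r ^ 3 * exp (- r\<^sup>2 / 4))) \<partial>lborel)"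
    by (intro nn_integral_cong) (auto simp: algebra_simps indicator_def simp flip: ennreal_plus)
  finally show ?thesis .
qed

lemma has_real_derivative_partial_fst:
  fixes \<psi> :: "real \<times> real \<Rightarrow> real"
  assumes "(\<psi> has_derivative (\<lambda>v. a * fst v + b * snd v)) (at (r, z) within S)"
    and "(\<lambda>t. (t, z)) ` T \<subseteq> S"
  shows "((\<lambda>t. \<psi> (t, z)) has_real_derivative a) (at r within T)"
proof -
  have "((\<lambda>t. (t, z)) has_derivative (\<lambda>h. (h, 0))) (at r within T)"
    by (rule derivative_eq_intros refl)+
  from has_derivative_in_compose[OF this has_derivative_subset[OF assms]]
  show ?thesis
    unfolding has_field_derivative_def by (simp add: o_def mult_commute_abs)
qed

lemma rho_star_Pair: "rho_star (r, z) = (exp (- z\<^sup>2 / 4) / (16 * sqrt pi)) * (r * exp (- r\<^sup>2 / 4))"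
  by (simp add: rho_star_def field_simps flip: exp_add)

lemma mu_weight_Pair: "mu_weight (r, z) = (exp (- z\<^sup>2 / 4) / (16 * sqrt pi)) * (r ^ 3 * exp (- r\<^sup>2 / 4))"
  by (simp add: mu_weight_def rho_star_Pair power2_eq_square power3_eq_cube)

text \<open>Applying the one-dimensional inequality to \<open>\<surd>c \<psi>(\<cdot>, z)\<close> absorbs the Gaussian factor
  \<open>c = exp (- z\<^sup>2 / 4) / (16 \<surd>\<pi>)\<close> common to both weights.\<close>
lemma nn_integral_rho_star_fibre_le:
  fixes \<psi> \<psi>r \<psi>z :: "real \<times> real \<Rightarrow> real"
  assumes der: "\<forall>p\<in>Hclosed. (\<psi> has_derivative (\<lambda>v. \<psi>r p * fst v + \<psi>z p * snd v)) (at p within Hclosed)"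
    and cont: "continuous_on Hclosed \<psi>r"
  shows "(\<integral>\<^sup>+r. ennreal ((\<psi> (r, z))\<^sup>2 * rho_star (r, z)) * indicator Hplane (r, z) \<partial>lborel)
    \<le> (\<integral>\<^sup>+r. ennreal (((3 * exp 1 + 1) * (\<psi> (r, z))\<^sup>2 + 8 * exp 1 * (\<psi>r (r, z))\<^sup>2) * mu_weight (r, z))
          * indicator Hplane (r, z) \<partial>lborel)"
proof -
  define c where "c = exp (- z\<^sup>2 / 4) / (16 * sqrt pi)"
  have "c \<ge> 0"
    by (simp add: c_def)
  have fibre: "(\<lambda>t. (t, z)) ` {0..} \<subseteq> Hclosed"
    by (auto simp: Hclosed_def)
  have "((\<lambda>t. sqrt c * \<psi> (t, z)) has_real_derivative sqrt c * \<psi>r (r, z)) (at r within {0..})"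
    if "0 \<le> r" for r
    using that der fibre
    by (intro DERIV_cmult has_real_derivative_partial_fst[where S = Hclosed and b = "\<psi>z (r, z)"])
       (auto simp: Hclosed_def)
  moreover have "continuous_on {0..} (\<lambda>t. sqrt c * \<psi>r (t, z))"
    by (intro continuous_intros continuous_on_compose2[OF cont] fibre)
  ultimately have "(\<integral>\<^sup>+r\<in>{0<..}. ennreal ((sqrt c * \<psi> (r, z))\<^sup>2 * (r * exp (- r\<^sup>2 / 4))) \<partial>lborel)
    \<le> (\<integral>\<^sup>+r\<in>{0<..}. ennreal (((3 * exp 1 + 1) * (sqrt c * \<psi> (r, z))\<^sup>2 + 8 * exp 1 * (sqrt c * \<psi>r (r, z))\<^sup>2)
          * (r ^ 3 * exp (- r\<^sup>2 / 4))) \<partial>lborel)"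
    by (rule gaussian_hardy_inequality)
  moreover have "indicator Hplane (r, z) = (indicator {0<..} r :: ennreal)" for r
    by (simp add: Hplane_def indicator_def)
  ultimately show ?thesis
    unfolding rho_star_Pair mu_weight_Pair c_def[symmetric]
    using \<open>c \<ge> 0\<close> by (simp add: power_mult_distrib algebra_simps)
qed

lemma open_Hplane: "open Hplane"
  unfolding Hplane_def by (intro open_Collect_less continuous_intros)

lemma rho_star_nonneg: "p \<in> Hplane \<Longrightarrow> 0 \<le> rho_star p"
  by (simp add: rho_star_def Hplane_def)

lemma mu_weight_nonneg: "p \<in> Hplane \<Longrightarrow> 0 \<le> mu_weight p"
  by (simp add: mu_weight_def rho_star_nonneg)

lemma continuous_on_rho_star: "continuous_on S rho_star"
  unfolding rho_star_def[abs_def] by (intro continuous_intros) auto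

lemma continuous_on_mu_weight: "continuous_on S mu_weight"
  unfolding mu_weight_def[abs_def] by (intro continuous_intros continuous_on_rho_star)

lemma continuous_on_Hplane_of_has_derivative:
  assumes "\<forall>p\<in>Hclosed. (\<psi> has_derivative D p) (at p within Hclosed)"
  shows "continuous_on Hplane \<psi>"
proof -
  have "continuous_on Hclosed \<psi>"
    using assms has_derivative_continuous continuous_on_eq_continuous_within by blast
  then show ?thesis
    by (rule continuous_on_subset) (auto simp: Hplane_def Hclosed_def)
qed

lemma nn_integral_rho_star_le:
  fixes \<psi> \<psi>r \<psi>z :: "real \<times> real \<Rightarrow> real"
  assumes der: "\<forall>p\<in>Hclosed. (\<psi> has_derivative (\<lambda>v. \<psi>r p * fst v + \<psi>z p * snd v)) (at p within Hclosed)"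
    and cont: "continuous_on Hclosed \<psi>r"
  shows "(\<integral>\<^sup>+p\<in>Hplane. ennreal ((\<psi> p)\<^sup>2 * rho_star p) \<partial>lborel)
    \<le> (\<integral>\<^sup>+p\<in>Hplane. ennreal (((3 * exp 1 + 1) * (\<psi> p)\<^sup>2 + 8 * exp 1 * (\<psi>r p)\<^sup>2) * mu_weight p) \<partial>lborel)"
proof -
  have cont_H: "continuous_on Hplane \<psi>" "continuous_on Hplane \<psi>r"
    using continuous_on_Hplane_of_has_derivative[OF der] cont
    by (auto intro: continuous_on_subset simp: Hplane_def Hclosed_def)
  have meas: "(\<lambda>p. ennreal (h p) * indicator Hplane p) \<in> borel_measurable borel"
    if "continuous_on Hplane h" for h :: "real \<times> real \<Rightarrow> real"
    using open_Hplane that by (intro borel_measurable_continuous_on_ennreal_indicator) auto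
  have "(\<integral>\<^sup>+p\<in>Hplane. ennreal ((\<psi> p)\<^sup>2 * rho_star p) \<partial>lborel)
      = (\<integral>\<^sup>+z. (\<integral>\<^sup>+r. ennreal ((\<psi> (r, z))\<^sup>2 * rho_star (r, z)) * indicator Hplane (r, z) \<partial>lborel) \<partial>lborel)"
    by (intro nn_integral_lborel_pair meas continuous_intros cont_H continuous_on_rho_star)
  also have "\<dots> \<le> (\<integral>\<^sup>+z. (\<integral>\<^sup>+r. ennreal (((3 * exp 1 + 1) * (\<psi> (r, z))\<^sup>2 + 8 * exp 1 * (\<psi>r (r, z))\<^sup>2)
      * mu_weight (r, z)) * indicator Hplane (r, z) \<partial>lborel) \<partial>lborel)"
    using der cont by (intro nn_integral_mono nn_integral_rho_star_fibre_le)
  also have "\<dots> = (\<integral>\<^sup>+p\<in>Hplane. ennreal (((3 * exp 1 + 1) * (\<psi> p)\<^sup>2 + 8 * exp 1 * (\<psi>r p)\<^sup>2) * mu_weight p) \<partial>lborel)"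
    by (intro nn_integral_lborel_pair[symmetric] meas continuous_intros cont_H continuous_on_mu_weight)
  finally show ?thesis .
qed

lemma L2norm_nonneg:
  assumes "\<And>x. x \<in> Hplane \<Longrightarrow> 0 \<le> w x"
  shows "0 \<le> L2norm w f"
  using assms unfolding L2norm_def set_lebesgue_integral_def
  by (auto intro!: integral_nonneg simp: indicator_def)

lemma memL2_L2norm_le:
  fixes h f g w v :: "real \<times> real \<Rightarrow> real"
  assumes meas: "set_borel_measurable borel Hplane (\<lambda>x. (h x)\<^sup>2 * w x)"
    and w: "\<And>x. x \<in> Hplane \<Longrightarrow> 0 \<le> w x" and v: "\<And>x. x \<in> Hplane \<Longrightarrow> 0 \<le> v x"
    and f: "memL2 v f" and g: "memL2 v g" and "0 \<le> A" "0 \<le> B"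
    and bound: "(\<integral>\<^sup>+x\<in>Hplane. ennreal ((h x)\<^sup>2 * w x) \<partial>lborel)
      \<le> (\<integral>\<^sup>+x\<in>Hplane. ennreal ((A * (f x)\<^sup>2 + B * (g x)\<^sup>2) * v x) \<partial>lborel)"
  shows "memL2 w h \<and> L2norm w h \<le> sqrt A * L2norm v f + sqrt B * L2norm v g"
proof -
  define a where "a = (\<integral>x\<in>Hplane. (f x)\<^sup>2 * v x \<partial>lborel)"
  define b where "b = (\<integral>x\<in>Hplane. (g x)\<^sup>2 * v x \<partial>lborel)"
  have "0 \<le> a" "0 \<le> b"
    using L2norm_nonneg[OF v, where f = f] L2norm_nonneg[OF v, where f = g]
    by (simp_all add: L2norm_def a_def b_def)
  have sum_eq: "(\<lambda>x. (A * (f x)\<^sup>2 + B * (g x)\<^sup>2) * v x) = (\<lambda>x. A * ((f x)\<^sup>2 * v x) + B * ((g x)\<^sup>2 * v x))"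
    by (simp add: fun_eq_iff algebra_simps)
  have "set_integrable lborel Hplane (\<lambda>x. (A * (f x)\<^sup>2 + B * (g x)\<^sup>2) * v x)"
    using f g unfolding memL2_def sum_eq by auto
  then have "(\<integral>\<^sup>+x\<in>Hplane. ennreal ((A * (f x)\<^sup>2 + B * (g x)\<^sup>2) * v x) \<partial>lborel) = ennreal (A * a + B * b)"
    using f g v \<open>0 \<le> A\<close> \<open>0 \<le> B\<close> unfolding memL2_def
    by (subst nn_integral_eq_set_integral) (auto simp: sum_eq a_def b_def)
  with bound have bound': "(\<integral>\<^sup>+x\<in>Hplane. ennreal ((h x)\<^sup>2 * w x) \<partial>lborel) \<le> ennreal (A * a + B * b)"
    by simp
  then have "memL2 w h"
    unfolding memL2_def using meas w
    by (intro set_integrableI_nn_integral_finite) (auto intro: le_less_trans simp: set_borel_measurable_def)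
  have "(\<integral>x\<in>Hplane. (h x)\<^sup>2 * w x \<partial>lborel) \<le> A * a + B * b"
    using bound' \<open>memL2 w h\<close> w \<open>0 \<le> A\<close> \<open>0 \<le> B\<close> \<open>0 \<le> a\<close> \<open>0 \<le> b\<close>
    unfolding memL2_def by (subst (asm) nn_integral_eq_set_integral) (auto simp del: ennreal_plus)
  then have "L2norm w h \<le> sqrt (A * a + B * b)"
    by (simp add: L2norm_def)
  also have "\<dots> \<le> sqrt (A * a) + sqrt (B * b)"
    using \<open>0 \<le> A\<close> \<open>0 \<le> B\<close> \<open>0 \<le> a\<close> \<open>0 \<le> b\<close> by (intro sqrt_add_le_add_sqrt) auto
  also have "\<dots> = sqrt A * L2norm v f + sqrt B * L2norm v g"
    by (simp add: L2norm_def a_def b_def real_sqrt_mult)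
  finally show ?thesis
    using \<open>memL2 w h\<close> by simp
qed

theorem lemmaA1:
  shows "\<exists>C::real. \<forall>(\<psi>::real \<times> real \<Rightarrow> real) (\<psi>r::real \<times> real \<Rightarrow> real) (\<psi>z::real \<times> real \<Rightarrow> real).
     (\<forall>p\<in>Hclosed. (\<psi> has_derivative (\<lambda>v. \<psi>r p * fst v + \<psi>z p * snd v)) (at p within Hclosed))
     \<and> continuous_on Hclosed \<psi>r \<and> continuous_on Hclosed \<psi>z
     \<and> memL2 mu_weight \<psi> \<and> memL2 mu_weight \<psi>r
     \<longrightarrow> memL2 rho_star \<psi> \<and>
         L2norm rho_star \<psi> \<le> C * (L2norm mu_weight \<psi> + L2norm mu_weight \<psi>r)"
proof (intro exI[of _ 5] allI impI, elim conjE)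
  fix \<psi> \<psi>r \<psi>z :: "real \<times> real \<Rightarrow> real"
  assume der: "\<forall>p\<in>Hclosed. (\<psi> has_derivative (\<lambda>v. \<psi>r p * fst v + \<psi>z p * snd v)) (at p within Hclosed)"
    and cont: "continuous_on Hclosed \<psi>r"
    and L2: "memL2 mu_weight \<psi>" "memL2 mu_weight \<psi>r"
  have "set_borel_measurable borel Hplane (\<lambda>p. (\<psi> p)\<^sup>2 * rho_star p)"
    unfolding set_borel_measurable_def
    using open_Hplane continuous_on_Hplane_of_has_derivative[OF der]
    by (intro borel_measurable_continuous_on_indicator continuous_intros continuous_on_rho_star) auto
  from memL2_L2norm_le[OF this rho_star_nonneg mu_weight_nonneg L2 _ _ nn_integral_rho_star_le[OF der cont]]
  have "memL2 rho_star \<psi>"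
    and bound: "L2norm rho_star \<psi> \<le> sqrt (3 * exp 1 + 1) * L2norm mu_weight \<psi> + sqrt (8 * exp 1) * L2norm mu_weight \<psi>r"
    by auto
  have "sqrt (3 * exp 1 + 1) \<le> 5" "sqrt (8 * exp 1) \<le> 5"
    using exp_le by (auto intro!: real_le_lsqrt)
  moreover have "0 \<le> L2norm mu_weight \<psi>" "0 \<le> L2norm mu_weight \<psi>r"
    by (simp_all add: L2norm_nonneg mu_weight_nonneg)
  ultimately have "L2norm rho_star \<psi> \<le> 5 * L2norm mu_weight \<psi> + 5 * L2norm mu_weight \<psi>r"
    using bound by (meson add_mono mult_right_mono order_trans)
  with \<open>memL2 rho_star \<psi>\<close> show "memL2 rho_star \<psi> \<and> L2norm rho_star \<psi> \<le> 5 * (L2norm mu_weight \<psi> + L2norm mu_weight \<psi>r)"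
    by (simp add: distrib_left)
qed

end
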